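(* Let $(Z_n)_{n\ge0}$ be a linear fractional Galton–Watson process in i.i.d. random environment (as in the context), fix $n\in\mathbb{N}$, and for $0\le m\le n$ let $Z_{m,n}$ be the number of individuals of generation $m$ that have at least one descendant in generation $n$. Then $(Z_{m,n})_{0\le m\le n}$ is nondecreasing in $m$ and $$\mathbf{P}^{(1:n)}(Z_{m,n}\in\cdot\mid Z_n>0)=\mathrm{Geom}_+\Big(1-\frac{R_m}{\Pi_n+R_n}\Big)\quad\text{a.s.}$$ Moreover, for $0\le l<m\le n$, under $\mathbf{P}^{(1:n)}(\cdot\mid Z_n>0)$ one has $Z_{m,n}\stackrel{d}{=}\sum_{i=1}^{Z_{l,n}}\zeta_i^{l,m}$, where $\zeta_1^{l,m},\zeta_2^{l,m},\dots$ are independent of $Z_{l,n}$, i.i.d., with common law $$\mathrm{Geom}_+\Big(1-\frac{R_m-R_l}{\Pi_n+R_n-R_l}\Big).$$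
   Context: Let $(A_n,B_n)_{n\ge1}$ be i.i.d. copies of $(A,B)$ with $\mathbb{P}(A>0,B>0,A+B\ge1)=1$; $e_n=(A_n,B_n)$. For $a,b>0$, $a+b\ge1$, $LF(a,b)$ is the distribution on $\mathbb{N}_0$ whose generating function $f$ satisfies $1/(1-f(s))=a/(1-s)+b$, $s\in[0,1)$. $\mathrm{Geom}_+(p)$ is the geometric law on $\{1,2,\dots\}$ with weights $p(1-p)^{k-1}$. $(Z_n)$, $Z_0=1$: given the environment, each individual of generation $k-1$ independently has offspring law $LF(A_k,B_k)$. $\Pi_0=1$, $\Pi_n=\prod_{k=1}^nA_k$, $R_0=0$, $R_n=\sum_{k=1}^n\Pi_{k-1}B_k$. $\mathbf{P}^{(1:n)}=\mathbb{P}(\cdot\mid e_1,\dots,e_n)$. *)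

theory Defs
  imports "HOL-Probability.Probability"
begin

definition LF :: "real \<Rightarrow> real \<Rightarrow> nat pmf" where
  "LF a b = (THE p :: nat pmf. \<forall>s::real. 0 \<le> s \<and> s < 1 \<longrightarrow>
      1 / (1 - (\<Sum>k. pmf p k * s ^ k)) = a / (1 - s) + b)"

definition geom_plus :: "real \<Rightarrow> nat pmf" where
  "geom_plus p = embed_pmf (\<lambda>k. if 1 \<le> k then p * (1 - p) ^ (k - 1) else 0)"

fun iid_list :: "nat \<Rightarrow> 'a pmf \<Rightarrow> 'a list pmf" where
  "iid_list 0 p = return_pmf []"
| "iid_list (Suc k) p = bind_pmf p (\<lambda>x. map_pmf (\<lambda>xs. x # xs) (iid_list k p))"

datatype gwtree = Node "gwtree list"

text \<open>Individuals at depth m of a tree (each as its subtree).\<close>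
fun nodes_at :: "nat \<Rightarrow> gwtree \<Rightarrow> gwtree list" where
  "nodes_at 0 t = [t]"
| "nodes_at (Suc m) (Node ts) = concat (map (nodes_at m) ts)"

text \<open>Family tree of an individual of generation k, observed for j further
generations, in the environment (a,b): each individual of generation i-1
has offspring law LF(a i, b i), independently.\<close>
fun gw_tree :: "(nat \<Rightarrow> real) \<Rightarrow> (nat \<Rightarrow> real) \<Rightarrow> nat \<Rightarrow> nat \<Rightarrow> gwtree pmf" where
  "gw_tree a b k 0 = return_pmf (Node [])"
| "gw_tree a b k (Suc j) =
     bind_pmf (LF (a (Suc k)) (b (Suc k)))
       (\<lambda>c. map_pmf Node (iid_list c (gw_tree a b (Suc k) j)))"

definition Zgen :: "nat \<Rightarrow> gwtree \<Rightarrow> nat" where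
  "Zgen m t = length (nodes_at m t)"

definition Zsurv :: "nat \<Rightarrow> nat \<Rightarrow> gwtree \<Rightarrow> nat" where
  "Zsurv m n t = length (filter (\<lambda>s. 0 < length (nodes_at (n - m) s)) (nodes_at m t))"

definition Pi_env :: "(nat \<Rightarrow> real) \<Rightarrow> nat \<Rightarrow> real" where
  "Pi_env a n = (\<Prod>k=1..n. a k)"

definition R_env :: "(nat \<Rightarrow> real) \<Rightarrow> (nat \<Rightarrow> real) \<Rightarrow> nat \<Rightarrow> real" where
  "R_env a b n = (\<Sum>k=1..n. Pi_env a (k - 1) * b k)"

end

theory Submission
  imports Defs "HOL-Complex_Analysis.Cauchy_Integral_Formula"
begin

(* The law LF(a,b) is characterised by its pgf f through the affine relation
   1/(1 - f s) = a/(1 - s) + b. Composing pgfs composes these affine maps, so a sum of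
   LF(a',b')-many i.i.d. LF(a,b) variables is LF(a' a, a' b + b'). Counting from the root,
   Z_{m,n} is the sum over the children of the root of the corresponding counts in the
   shifted environment, and Z_{0,n} is the indicator of Z_n > 0, which is LF(Pi_n + R_n, 0);
   induction on m gives Z_{m,n} ~ LF(Pi_n + R_n - R_m, R_m). Every LF(a,b) law is a
   zero-inflated Geom_+(a/(a+b)), and {Z_{m,n} > 0} = {Z_n > 0}, which yields the geometric
   laws given survival. Finally Geom_+(p) = LF(p, 1 - p), so compounding Geom_+(p) with
   Geom_+(q) gives Geom_+(p q): this is the branching representation between generations
   l and m. *)

section \<open>Probability generating functions\<close>

definition pgf :: "nat pmf \<Rightarrow> real \<Rightarrow> real" where
  "pgf p s = (\<Sum>k. pmf p k * s ^ k)"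

lemma summable_pgf: "\<bar>s\<bar> \<le> 1 \<Longrightarrow> summable (\<lambda>k. pmf p k * s ^ k)"
proof (rule summable_comparison_test)
  show "summable (pmf p)"
    using pmf_abs_summable[of p UNIV] by (simp add: abs_summable_on_nat_iff')
  show "\<exists>N. \<forall>k\<ge>N. norm (pmf p k * s ^ k) \<le> pmf p k" if "\<bar>s\<bar> \<le> 1"
    using that by (auto simp: abs_mult power_abs intro!: mult_left_le power_le_one)
qed

lemma nn_integral_power_pmf:
  assumes "0 \<le> s" "s \<le> 1"
  shows "(\<integral>\<^sup>+k. ennreal (s ^ k) \<partial>measure_pmf p) = ennreal (pgf p s)"
proof -
  have "(\<integral>\<^sup>+k. ennreal (s ^ k) \<partial>measure_pmf p) = (\<Sum>k. ennreal (pmf p k * s ^ k))"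
    by (simp add: nn_integral_measure_pmf nn_integral_count_space_nat ennreal_mult assms)
  also have "\<dots> = ennreal (pgf p s)"
    unfolding pgf_def using assms summable_pgf[of s p] by (intro suminf_ennreal2) auto
  finally show ?thesis .
qed

lemma pgf_nonneg: "0 \<le> s \<Longrightarrow> s \<le> 1 \<Longrightarrow> 0 \<le> pgf p s"
  unfolding pgf_def by (intro suminf_nonneg summable_pgf) auto

lemma pgf_le_1:
  assumes "0 \<le> s" "s \<le> 1"
  shows "pgf p s \<le> 1"
proof -
  have "ennreal (pgf p s) \<le> (\<integral>\<^sup>+k. 1 \<partial>measure_pmf p)"
    unfolding nn_integral_power_pmf[OF assms, symmetric]
    using assms by (intro nn_integral_mono) (auto intro: power_le_one)
  then show ?thesis by simp
qed

lemma pgf_eqI: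
  assumes "0 \<le> s" "s \<le> 1" "0 \<le> r" "(\<integral>\<^sup>+k. ennreal (s ^ k) \<partial>measure_pmf p) = ennreal r"
  shows "pgf p s = r"
  using assms nn_integral_power_pmf[of s p] pgf_nonneg[of s p] by simp

lemma pgf_0: "pgf p 0 = pmf p 0"
  unfolding pgf_def using powser_zero[of "pmf p"] by simp

lemma pmf_eqI_pgf:
  assumes eq: "\<And>s. 0 \<le> s \<Longrightarrow> s < 1 \<Longrightarrow> pgf p s = pgf q s"
  shows "p = q"
proof (rule pmf_eqI)
  fix k
  define c where "c i = pmf p i - pmf q i" for i
  define f where "f s = pgf p s - pgf q s" for s
  have sums: "(\<lambda>i. c i * s ^ i) sums f s" if "norm (s - 0) < 1" for s :: real
    unfolding c_def f_def pgf_def left_diff_distrib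
    using that by (intro sums_diff summable_sums summable_pgf) auto
  have "c k = 0"
  proof (cases k)
    case 0
    then show ?thesis using eq[of 0] by (simp add: c_def pgf_0)
  next
    case (Suc j)
    show ?thesis
    proof (rule ccontr)
      assume "c k \<noteq> 0"
      then obtain r where r: "0 < r" and nz: "\<And>z. z \<in> cball 0 r - {0} \<Longrightarrow> f z \<noteq> 0"
        using powser_0_nonzero[of 1 0 c f k] sums Suc by (auto simp: f_def eq)
      have "f (min r (1/2)) \<noteq> 0" using r by (intro nz) auto
      then show False using r by (simp add: f_def eq)
    qed
  qed
  then show "pmf p k = pmf q k" by (simp add: c_def)
qed

lemma pgf_return: "0 \<le> s \<Longrightarrow> s \<le> 1 \<Longrightarrow> pgf (return_pmf k) s = s ^ k"
  by (rule pgf_eqI) auto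

lemma pgf_map_Suc:
  assumes "0 \<le> s" "s \<le> 1"
  shows "pgf (map_pmf Suc p) s = s * pgf p s"
proof (rule pgf_eqI)
  have "(\<integral>\<^sup>+k. ennreal (s ^ Suc k) \<partial>measure_pmf p) = ennreal s * ennreal (pgf p s)"
    using assms by (simp add: ennreal_mult nn_integral_cmult nn_integral_power_pmf)
  then show "(\<integral>\<^sup>+k. ennreal (s ^ k) \<partial>measure_pmf (map_pmf Suc p)) = ennreal (s * pgf p s)"
    using assms by (simp add: ennreal_mult pgf_nonneg)
qed (use assms pgf_nonneg in auto)

lemma ennreal_pgf_bind:
  assumes "0 \<le> s" "s \<le> 1"
  shows "ennreal (pgf (bind_pmf p f) s) = (\<integral>\<^sup>+x. ennreal (pgf (f x) s) \<partial>measure_pmf p)"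
  by (simp add: nn_integral_power_pmf[OF assms, symmetric])

definition zero_inflated_pmf :: "real \<Rightarrow> nat pmf \<Rightarrow> nat pmf" where
  "zero_inflated_pmf r p = bind_pmf (bernoulli_pmf r) (\<lambda>x. if x then p else return_pmf 0)"

lemma pgf_zero_inflated:
  assumes "0 \<le> s" "s \<le> 1" "0 \<le> r" "r \<le> 1"
  shows "pgf (zero_inflated_pmf r p) s = r * pgf p s + (1 - r)"
proof -
  have "ennreal (pgf (zero_inflated_pmf r p) s) = ennreal (r * pgf p s + (1 - r))"
    using assms pgf_nonneg[OF assms(1,2)] unfolding zero_inflated_pmf_def
    by (simp add: ennreal_pgf_bind pgf_return ennreal_mult' ennreal_plus[symmetric] mult.commute)
  then show ?thesis
    using assms pgf_nonneg[OF assms(1,2)] by (subst (asm) ennreal_inj) auto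
qed

lemma
  fixes p :: "nat pmf"
  assumes r: "0 < r" "r \<le> 1" and p: "set_pmf p \<subseteq> {0<..}"
  shows set_pmf_zero_inflated_positive: "set_pmf (zero_inflated_pmf r p) \<inter> {0<..} \<noteq> {}"
    and cond_pmf_zero_inflated: "cond_pmf (zero_inflated_pmf r p) {0<..} = p"
proof -
  have "True \<in> set_pmf (bernoulli_pmf r)" using r by (simp add: set_pmf_iff)
  then have "set_pmf p \<subseteq> set_pmf (zero_inflated_pmf r p)" unfolding zero_inflated_pmf_def by auto
  then show ne: "set_pmf (zero_inflated_pmf r p) \<inter> {0<..} \<noteq> {}"
    using p set_pmf_not_empty[of p] by blast
  have pmf_zi: "pmf (zero_inflated_pmf r p) k = r * pmf p k + (1 - r) * indicator {k} 0" for k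
    unfolding zero_inflated_pmf_def using r by (simp add: pmf_bind)
  have "pmf p 0 = 0" using p by (auto simp: set_pmf_iff)
  moreover have "{0<..} = UNIV - {0::nat}" by auto
  ultimately have "measure_pmf.prob (zero_inflated_pmf r p) {0<..} = r"
    using measure_pmf.prob_compl[of "{0}" "zero_inflated_pmf r p"] by (simp add: pmf_zi measure_pmf_single)
  then show "cond_pmf (zero_inflated_pmf r p) {0<..} = p"
    using r p by (intro pmf_eqI) (auto simp: pmf_cond[OF ne] pmf_zi set_pmf_iff)
qed

definition compound_pmf :: "nat pmf \<Rightarrow> nat pmf \<Rightarrow> nat pmf" where
  "compound_pmf p q = bind_pmf p (\<lambda>c. map_pmf sum_list (iid_list c q))"

lemma nn_integral_power_sum_iid:
  assumes "0 \<le> s" "s \<le> 1"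
  shows "(\<integral>\<^sup>+xs. ennreal (s ^ sum_list xs) \<partial>measure_pmf (iid_list c q)) = ennreal (pgf q s ^ c)"
proof (induction c)
  case (Suc c)
  have "(\<integral>\<^sup>+xs. ennreal (s ^ sum_list xs) \<partial>measure_pmf (iid_list (Suc c) q))
      = (\<integral>\<^sup>+x. ennreal (s ^ x) * ennreal (pgf q s ^ c) \<partial>measure_pmf q)"
    using assms Suc by (simp add: power_add ennreal_mult nn_integral_cmult)
  also have "\<dots> = ennreal (pgf q s ^ Suc c)"
    using pgf_nonneg[OF assms]
    by (simp add: nn_integral_multc nn_integral_power_pmf[OF assms] ennreal_mult[symmetric])
  finally show ?case .
qed simp

lemma pgf_compound:
  assumes "0 \<le> s" "s \<le> 1"
  shows "pgf (compound_pmf p q) s = pgf p (pgf q s)"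
proof (rule pgf_eqI)
  have u: "0 \<le> pgf q s" "pgf q s \<le> 1" using assms by (auto intro: pgf_nonneg pgf_le_1)
  show "(\<integral>\<^sup>+k. ennreal (s ^ k) \<partial>measure_pmf (compound_pmf p q)) = ennreal (pgf p (pgf q s))"
    unfolding compound_pmf_def
    by (simp add: nn_integral_power_sum_iid[OF assms] nn_integral_power_pmf[OF u])
qed (use assms in \<open>auto intro: pgf_nonneg pgf_le_1\<close>)

lemma pgf_geometric:
  assumes "0 < p" "p \<le> 1" "0 \<le> s" "s \<le> 1"
  shows "pgf (geometric_pmf p) s = p / (1 - (1 - p) * s)"
proof -
  have "norm ((1 - p) * s) < 1"
    using assms mult_left_le[of s "1 - p"] by auto
  then have "(\<lambda>k. p * ((1 - p) * s) ^ k) sums (p * (1 / (1 - (1 - p) * s)))"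
    by (intro sums_mult geometric_sums)
  then show ?thesis
    using assms unfolding pgf_def by (simp add: sums_iff power_mult_distrib mult_ac)
qed

lemma geom_plus_eq_map_Suc:
  assumes "0 < p" "p \<le> 1"
  shows "geom_plus p = map_pmf Suc (geometric_pmf p)"
proof -
  have "(\<lambda>k. if 1 \<le> k then p * (1 - p) ^ (k - 1) else 0) = pmf (map_pmf Suc (geometric_pmf p))"
  proof
    show "(if 1 \<le> k then p * (1 - p) ^ (k - 1) else 0) = pmf (map_pmf Suc (geometric_pmf p)) k" for k
      using assms by (cases k) (auto simp: pmf_map_inj' pmf_map_outside)
  qed
  then show ?thesis
    unfolding geom_plus_def by (simp add: type_definition.Rep_inverse[OF td_pmf_embed_pmf])
qed

lemma pgf_geom_plus:
  assumes "0 < p" "p \<le> 1" "0 \<le> s" "s \<le> 1"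
  shows "pgf (geom_plus p) s = p * s / (1 - (1 - p) * s)"
  using assms by (simp add: geom_plus_eq_map_Suc pgf_map_Suc pgf_geometric)

lemma pgf_map_positive_indicator:
  fixes q :: "nat pmf"
  assumes "0 \<le> s" "s \<le> 1"
  shows "pgf (map_pmf (\<lambda>z. if 0 < z then 1 else 0) q) s = s + (1 - s) * pmf q 0"
proof (rule pgf_eqI)
  have "(\<integral>\<^sup>+z. ennreal (s ^ (if 0 < z then 1 else 0)) \<partial>measure_pmf q)
      = (\<integral>\<^sup>+z. ennreal s + ennreal (1 - s) * ennreal (0 ^ z) \<partial>measure_pmf q)"
    using assms by (intro nn_integral_cong) (auto simp: ennreal_plus[symmetric])
  also have "\<dots> = ennreal (s + (1 - s) * pmf q 0)"
    using assms nn_integral_power_pmf[of 0 q]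
    by (simp add: nn_integral_add nn_integral_cmult pgf_0 ennreal_plus ennreal_mult)
  finally show "(\<integral>\<^sup>+k. ennreal (s ^ k) \<partial>measure_pmf (map_pmf (\<lambda>z. if 0 < z then 1 else 0) q))
      = ennreal (s + (1 - s) * pmf q 0)"
    by simp
qed (use assms in auto)

section \<open>Linear fractional laws\<close>

definition is_LF :: "real \<Rightarrow> real \<Rightarrow> nat pmf \<Rightarrow> bool" where
  "is_LF a b q \<longleftrightarrow> (\<forall>s. 0 \<le> s \<and> s < 1 \<longrightarrow> 1 / (1 - pgf q s) = a / (1 - s) + b)"

lemma is_LF_unique:
  assumes "is_LF a b p" "is_LF a b q"
  shows "p = q"
proof (rule pmf_eqI_pgf)
  fix s :: real assume "0 \<le> s" "s < 1"
  then have "1 / (1 - pgf p s) = 1 / (1 - pgf q s)" using assms unfolding is_LF_def by auto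
  then show "pgf p s = pgf q s" by simp
qed

lemma LF_eqI:
  assumes "is_LF a b q"
  shows "LF a b = q"
proof -
  have "LF a b = (THE q. is_LF a b q)"
    unfolding LF_def is_LF_def pgf_def ..
  then show ?thesis
    using assms by (simp add: the_equality is_LF_unique)
qed

lemma is_LF_geom_plus:
  assumes "0 < p" "p \<le> 1"
  shows "is_LF p (1 - p) (geom_plus p)"
  unfolding is_LF_def
proof (intro allI impI, elim conjE)
  fix s :: real assume s: "0 \<le> s" "s < 1"
  have "(1 - p) * s < 1" using assms s mult_left_le[of s "1 - p"] by auto
  then have "1 - pgf (geom_plus p) s = (1 - s) / (1 - (1 - p) * s)"
    using assms s by (simp add: pgf_geom_plus field_simps)
  then have "1 / (1 - pgf (geom_plus p) s) = (1 - (1 - p) * s) / (1 - s)"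
    by simp
  also have "\<dots> = p / (1 - s) + (1 - p)"
    using s by (simp add: field_simps)
  finally show "1 / (1 - pgf (geom_plus p) s) = p / (1 - s) + (1 - p)" .
qed

lemma is_LF_zero_inflated:
  assumes q: "is_LF a b q" and r: "0 < r" "r \<le> 1"
  shows "is_LF (a / r) (b / r) (zero_inflated_pmf r q)"
  unfolding is_LF_def
proof (intro allI impI, elim conjE)
  fix s :: real assume s: "0 \<le> s" "s < 1"
  have "1 - pgf (zero_inflated_pmf r q) s = r * (1 - pgf q s)"
    using r s by (simp add: pgf_zero_inflated algebra_simps)
  then have "1 / (1 - pgf (zero_inflated_pmf r q) s) = (1 / (1 - pgf q s)) / r"
    by simp
  also have "\<dots> = a / r / (1 - s) + b / r"
    using q s unfolding is_LF_def by (simp add: add_divide_distrib)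
  finally show "1 / (1 - pgf (zero_inflated_pmf r q) s) = a / r / (1 - s) + b / r" .
qed

lemma
  assumes "0 < a" "0 \<le> b" "1 \<le> a + b"
  shows LF_eq_zero_inflated: "LF a b = zero_inflated_pmf (1 / (a + b)) (geom_plus (a / (a + b)))"
    and is_LF_LF: "is_LF a b (LF a b)"
proof -
  have "is_LF (a / (a + b)) (b / (a + b)) (geom_plus (a / (a + b)))"
    using is_LF_geom_plus[of "a / (a + b)"] assms by (simp add: field_simps)
  then have "is_LF a b (zero_inflated_pmf (1 / (a + b)) (geom_plus (a / (a + b))))"
    using is_LF_zero_inflated[of _ _ _ "1 / (a + b)"] assms by fastforce
  then show "LF a b = zero_inflated_pmf (1 / (a + b)) (geom_plus (a / (a + b)))"
    and "is_LF a b (LF a b)"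
    using LF_eqI by simp_all
qed

lemma is_LF_pgf_less_1:
  assumes "is_LF a b q" "0 < a" "0 \<le> b" "0 \<le> s" "s < 1"
  shows "pgf q s < 1"
proof -
  have "1 / (1 - pgf q s) = a / (1 - s) + b" using assms unfolding is_LF_def by auto
  moreover have "0 < a / (1 - s) + b" using assms by (intro add_pos_nonneg divide_pos_pos) auto
  ultimately have "pgf q s \<noteq> 1" by auto
  then show ?thesis using pgf_le_1[of s q] assms by auto
qed

lemma is_LF_sum_ge_1:
  assumes "is_LF a b q" "0 < a" "0 \<le> b"
  shows "1 \<le> a + b"
proof -
  have "1 / (1 - pmf q 0) = a + b" using assms unfolding is_LF_def by (simp add: pgf_0[symmetric])
  moreover have "0 < 1 - pmf q 0" using is_LF_pgf_less_1[OF assms, of 0] by (simp add: pgf_0)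
  ultimately have "(a + b) * (1 - pmf q 0) = 1" by (simp add: field_simps)
  moreover have "(a + b) * (1 - pmf q 0) \<le> a + b"
    using assms by (intro mult_left_le) auto
  ultimately show ?thesis by simp
qed

lemma is_LF_compound:
  assumes p: "is_LF a' b' p" and q: "is_LF a b q" and ab: "0 < a" "0 \<le> b"
  shows "is_LF (a' * a) (a' * b + b') (compound_pmf p q)"
  unfolding is_LF_def
proof (intro allI impI, elim conjE)
  fix s :: real assume s: "0 \<le> s" "s < 1"
  define u where "u = pgf q s"
  have u: "0 \<le> u" "u < 1" unfolding u_def using pgf_nonneg is_LF_pgf_less_1[OF q ab] s by auto
  have "1 / (1 - pgf (compound_pmf p q) s) = a' / (1 - u) + b'"
    using p u s unfolding is_LF_def by (simp add: pgf_compound u_def)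
  also have "\<dots> = a' * (a / (1 - s) + b) + b'"
    using q s unfolding is_LF_def u_def by (metis times_divide_eq_right mult_1_right)
  finally show "1 / (1 - pgf (compound_pmf p q) s) = a' * a / (1 - s) + (a' * b + b')"
    by (simp add: algebra_simps)
qed

lemma compound_geom_plus:
  assumes "0 < p" "p \<le> 1" "0 < q" "q \<le> 1"
  shows "compound_pmf (geom_plus p) (geom_plus q) = geom_plus (p * q)"
proof (rule is_LF_unique)
  show "is_LF (p * q) (1 - p * q) (compound_pmf (geom_plus p) (geom_plus q))"
    using is_LF_compound[OF is_LF_geom_plus is_LF_geom_plus, of p q] assms
    by (simp add: algebra_simps)
  show "is_LF (p * q) (1 - p * q) (geom_plus (p * q))"
    using assms by (intro is_LF_geom_plus) (auto intro: mult_le_one)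
qed

lemma geom_plus_split:
  assumes "0 \<le> r" "r \<le> r'" "r' < d"
  shows "geom_plus (1 - r' / d) = compound_pmf (geom_plus (1 - r / d)) (geom_plus (1 - (r' - r) / (d - r)))"
proof -
  have "0 < 1 - r / d" "1 - r / d \<le> 1" "0 < 1 - (r' - r) / (d - r)" "1 - (r' - r) / (d - r) \<le> 1"
    using assms by (auto simp: field_simps)
  moreover have "(1 - r / d) * (1 - (r' - r) / (d - r)) = 1 - r' / d"
    using assms by (simp add: field_simps)
  ultimately show ?thesis
    using compound_geom_plus[of "1 - r / d" "1 - (r' - r) / (d - r)"] by simp
qed

lemma is_LF_positive_indicator:
  assumes "is_LF a b q"
  shows "is_LF (a + b) 0 (map_pmf (\<lambda>z. if 0 < z then 1 else 0) q)"
  unfolding is_LF_def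
proof (intro allI impI, elim conjE)
  fix s :: real assume s: "0 \<le> s" "s < 1"
  have "1 - pgf (map_pmf (\<lambda>z. if 0 < z then 1 else 0) q) s = (1 - s) * (1 - pmf q 0)"
    using s by (simp add: pgf_map_positive_indicator algebra_simps)
  then have "1 / (1 - pgf (map_pmf (\<lambda>z. if 0 < z then 1 else 0) q) s) = 1 / (1 - pmf q 0) / (1 - s)"
    by simp
  also have "1 / (1 - pmf q 0) = a + b"
    using assms unfolding is_LF_def by (simp add: pgf_0[symmetric])
  finally show "1 / (1 - pgf (map_pmf (\<lambda>z. if 0 < z then 1 else 0) q) s) = (a + b) / (1 - s) + 0"
    by simp
qed

lemma
  assumes "0 < a" "0 \<le> b" "1 \<le> a + b"
  shows set_pmf_LF_positive: "set_pmf (LF a b) \<inter> {0<..} \<noteq> {}"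
    and cond_pmf_LF_positive: "cond_pmf (LF a b) {0<..} = geom_plus (a / (a + b))"
proof -
  have "0 < a / (a + b)" "a / (a + b) \<le> 1" using assms by auto
  then have "set_pmf (geom_plus (a / (a + b))) \<subseteq> {0<..}"
    by (auto simp: geom_plus_eq_map_Suc)
  moreover have "0 < 1 / (a + b)" "1 / (a + b) \<le> 1" using assms by auto
  ultimately show "set_pmf (LF a b) \<inter> {0<..} \<noteq> {}" "cond_pmf (LF a b) {0<..} = geom_plus (a / (a + b))"
    unfolding LF_eq_zero_inflated[OF assms]
    by (simp_all add: set_pmf_zero_inflated_positive cond_pmf_zero_inflated)
qed

section \<open>Surviving individuals in a family tree\<close>

lemma nodes_at_add: "nodes_at (i + k) t = concat (map (nodes_at k) (nodes_at i t))"
proof (induction i arbitrary: t)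
  case (Suc i)
  obtain ts where t: "t = Node ts" by (cases t)
  have "concat (map (nodes_at (i + k)) ts) = concat (map (nodes_at k) (concat (map (nodes_at i) ts)))"
    by (induction ts) (simp_all add: Suc.IH)
  then show ?case by (simp add: t)
qed simp

lemma Zgen_Node: "Zgen (Suc j) (Node ts) = sum_list (map (Zgen j) ts)"
  by (simp add: Zgen_def[abs_def] length_concat o_def)

lemma Zsurv_Node: "Zsurv (Suc m) (Suc j) (Node ts) = sum_list (map (Zsurv m j) ts)"
  by (simp add: Zsurv_def[abs_def] filter_concat length_concat o_def)

lemma Zsurv_0: "Zsurv 0 j t = (if 0 < Zgen j t then 1 else 0)"
  by (simp add: Zsurv_def Zgen_def)

lemma Zsurv_split:
  assumes "l \<le> m" "m \<le> n"
  shows "Zsurv m n t = sum_list (map (Zsurv (m - l) (n - l)) (nodes_at l t))"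
proof -
  have m: "m = l + (m - l)" and "n - l - (m - l) = n - m" using assms by simp_all
  then show ?thesis
    unfolding Zsurv_def by (subst m, subst nodes_at_add) (simp add: filter_concat length_concat o_def)
qed

lemma Zsurv_pos_iff:
  assumes "m \<le> n"
  shows "0 < Zsurv m n t \<longleftrightarrow> 0 < Zgen n t"
proof -
  have n: "n = m + (n - m)" using assms by simp
  have "Zgen n t = length (concat (map (nodes_at (n - m)) (nodes_at m t)))"
    unfolding Zgen_def by (subst n, subst nodes_at_add) simp
  then show ?thesis
    unfolding Zsurv_def by (auto simp: filter_empty_conv simp flip: length_greater_0_conv)
qed

lemma Zsurv_mono:
  assumes "l \<le> m" "m \<le> n"
  shows "Zsurv l n t \<le> Zsurv m n t"
proof -
  have "Zsurv l n t = sum_list (map (Zsurv 0 (n - l)) (nodes_at l t))"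
    using Zsurv_split[of l l n] assms by simp
  also have "\<dots> \<le> sum_list (map (Zsurv (m - l) (n - l)) (nodes_at l t))"
    using Zsurv_pos_iff[of "m - l" "n - l"] assms by (intro sum_list_mono) (auto simp: Zsurv_0 Suc_le_eq)
  also have "\<dots> = Zsurv m n t"
    using Zsurv_split[OF assms] by simp
  finally show ?thesis .
qed

section \<open>The environment\<close>

definition valid_env :: "(nat \<Rightarrow> real) \<Rightarrow> (nat \<Rightarrow> real) \<Rightarrow> nat \<Rightarrow> bool" where
  "valid_env a b n \<longleftrightarrow> (\<forall>k. 1 \<le> k \<and> k \<le> n \<longrightarrow> 0 < a k \<and> 0 < b k \<and> 1 \<le> a k + b k)"

lemma valid_env_shift: "valid_env a b (Suc j) \<Longrightarrow> valid_env (a \<circ> Suc) (b \<circ> Suc) j"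
  unfolding valid_env_def by auto

lemma gw_tree_shift: "gw_tree a b (Suc k) j = gw_tree (a \<circ> Suc) (b \<circ> Suc) k j"
  by (induction j arbitrary: k) simp_all

lemma Pi_env_0 [simp]: "Pi_env a 0 = 1"
  by (simp add: Pi_env_def)

lemma R_env_0 [simp]: "R_env a b 0 = 0"
  by (simp add: R_env_def)

lemma Pi_env_Suc: "Pi_env a (Suc j) = a 1 * Pi_env (a \<circ> Suc) j"
  unfolding Pi_env_def
  by (simp add: prod.shift_bounds_cl_Suc_ivl[of a 0 j, simplified] prod.atLeast_Suc_atMost[of 0 j])

lemma R_env_Suc: "R_env a b (Suc j) = b 1 + a 1 * R_env (a \<circ> Suc) (b \<circ> Suc) j"
proof -
  have "R_env a b (Suc j) = (\<Sum>k=0..j. Pi_env a k * b (Suc k))"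
    unfolding R_env_def using sum.shift_bounds_cl_Suc_ivl[of "\<lambda>k. Pi_env a (k - 1) * b k" 0 j] by simp
  also have "\<dots> = b 1 + (\<Sum>k=1..j. Pi_env a k * b (Suc k))"
    by (simp add: sum.atLeast_Suc_atMost[of 0 j])
  also have "(\<Sum>k=1..j. Pi_env a k * b (Suc k)) = a 1 * R_env (a \<circ> Suc) (b \<circ> Suc) j"
    unfolding R_env_def sum_distrib_left
  proof (intro sum.cong refl)
    fix k assume "k \<in> {1..j}"
    then have "Pi_env a k = a 1 * Pi_env (a \<circ> Suc) (k - 1)"
      using Pi_env_Suc[of a "k - 1"] by simp
    then show "Pi_env a k * b (Suc k) = a 1 * (Pi_env (a \<circ> Suc) (k - 1) * (b \<circ> Suc) k)"
      by simp
  qed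
  finally show ?thesis .
qed

lemma Pi_env_pos: "valid_env a b j \<Longrightarrow> i \<le> j \<Longrightarrow> 0 < Pi_env a i"
  unfolding Pi_env_def valid_env_def by (intro prod_pos) auto

lemma R_env_mono:
  assumes "valid_env a b j" "l \<le> m" "m \<le> j"
  shows "R_env a b l \<le> R_env a b m"
  unfolding R_env_def
proof (rule sum_mono2)
  show "0 \<le> Pi_env a (k - 1) * b k" if "k \<in> {1..m} - {1..l}" for k
    using that assms Pi_env_pos[OF assms(1), of "k - 1"] unfolding valid_env_def
    by (intro mult_nonneg_nonneg) (auto simp: less_imp_le)
qed (use assms in auto)

lemma R_env_nonneg: "valid_env a b j \<Longrightarrow> m \<le> j \<Longrightarrow> 0 \<le> R_env a b m"
  using R_env_mono[of a b j 0 m] by simp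

section \<open>Laws of the generation sizes\<close>

lemma iid_list_map: "iid_list c (map_pmf f p) = map_pmf (map f) (iid_list c p)"
  by (induction c) (simp_all add: map_bind_pmf bind_map_pmf map_pmf_comp)

lemma is_LF_gw_tree_Suc:
  assumes env: "valid_env a b (Suc j)"
    and additive: "\<And>ts. X (Node ts) = sum_list (map Y ts)"
    and Y: "is_LF \<alpha> \<beta> (map_pmf Y (gw_tree (a \<circ> Suc) (b \<circ> Suc) 0 j))" "0 < \<alpha>" "0 \<le> \<beta>"
  shows "is_LF (a 1 * \<alpha>) (a 1 * \<beta> + b 1) (map_pmf X (gw_tree a b 0 (Suc j)))"
proof -
  have "map_pmf X (gw_tree a b 0 (Suc j))
      = compound_pmf (LF (a 1) (b 1)) (map_pmf Y (gw_tree (a \<circ> Suc) (b \<circ> Suc) 0 j))"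
    unfolding compound_pmf_def
    by (simp add: map_bind_pmf map_pmf_comp iid_list_map gw_tree_shift additive o_def)
  moreover have "is_LF (a 1) (b 1) (LF (a 1) (b 1))"
    using env unfolding valid_env_def by (intro is_LF_LF) auto
  ultimately show ?thesis
    using is_LF_compound Y by simp
qed

lemma is_LF_Zgen:
  "valid_env a b j \<Longrightarrow> is_LF (Pi_env a j) (R_env a b j) (map_pmf (Zgen j) (gw_tree a b 0 j))"
proof (induction j arbitrary: a b)
  case 0
  have "map_pmf (Zgen 0) (gw_tree a b 0 0) = geom_plus 1"
    by (simp add: Zgen_def geom_plus_eq_map_Suc)
  then show ?case using is_LF_geom_plus[of 1] by simp
next
  case (Suc j)
  have env: "valid_env (a \<circ> Suc) (b \<circ> Suc) j" using valid_env_shift[OF Suc.prems] .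
  show ?case
    unfolding Pi_env_Suc R_env_Suc
    using is_LF_gw_tree_Suc[OF Suc.prems Zgen_Node Suc.IH[OF env] Pi_env_pos[OF env] R_env_nonneg[OF env]]
    by (simp add: add.commute)
qed

lemma is_LF_Zsurv:
  "m \<le> j \<Longrightarrow> valid_env a b j \<Longrightarrow>
    is_LF (Pi_env a j + R_env a b j - R_env a b m) (R_env a b m) (map_pmf (Zsurv m j) (gw_tree a b 0 j))"
proof (induction m arbitrary: j a b)
  case 0
  have "map_pmf (Zsurv 0 j) (gw_tree a b 0 j)
      = map_pmf (\<lambda>z. if 0 < z then 1 else 0) (map_pmf (Zgen j) (gw_tree a b 0 j))"
    unfolding map_pmf_comp by (intro map_pmf_cong) (simp_all add: Zsurv_0)
  then show ?case using is_LF_positive_indicator[OF is_LF_Zgen[OF "0.prems"(2)]] by simp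
next
  case (Suc m)
  then obtain j' where j: "j = Suc j'" and m: "m \<le> j'" by (cases j) auto
  have env: "valid_env (a \<circ> Suc) (b \<circ> Suc) j'" using valid_env_shift Suc.prems j by simp
  have "0 < Pi_env (a \<circ> Suc) j' + R_env (a \<circ> Suc) (b \<circ> Suc) j' - R_env (a \<circ> Suc) (b \<circ> Suc) m"
    using Pi_env_pos[OF env, of j'] R_env_mono[OF env m] by simp
  from is_LF_gw_tree_Suc[OF _ Zsurv_Node Suc.IH[OF m env] this R_env_nonneg[OF env m]]
  show ?case
    using Suc.prems unfolding j Pi_env_Suc R_env_Suc by (simp add: algebra_simps)
qed

lemma map_pmf_Zsurv_cond_pmf:
  assumes env: "valid_env a b n" and m: "m \<le> n"
  shows "map_pmf (Zsurv m n) (cond_pmf (gw_tree a b 0 n) {t. 0 < Zgen n t})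
       = geom_plus (1 - R_env a b m / (Pi_env a n + R_env a b n))"
proof -
  define T where "T = gw_tree a b 0 n"
  define D where "D = Pi_env a n + R_env a b n"
  define R where "R = R_env a b m"
  have L: "is_LF (D - R) R (map_pmf (Zsurv m n) T)"
    unfolding T_def D_def R_def using is_LF_Zsurv[OF m env] .
  have params: "0 < D - R" "0 \<le> R"
    unfolding D_def R_def using Pi_env_pos[OF env order.refl] R_env_mono[OF env m order.refl] R_env_nonneg[OF env m]
    by auto
  then have "1 \<le> D" using is_LF_sum_ge_1[OF L] by simp
  have law: "map_pmf (Zsurv m n) T = LF (D - R) R" using LF_eqI[OF L] by simp
  have "set_pmf T \<inter> Zsurv m n -` {0<..} \<noteq> {}"
    using set_pmf_LF_positive[of "D - R" R] params \<open>1 \<le> D\<close> unfolding law[symmetric] by auto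
  moreover have "Zsurv m n -` {0<..} = {t. 0 < Zgen n t}" using Zsurv_pos_iff[OF m] by auto
  ultimately have "map_pmf (Zsurv m n) (cond_pmf T {t. 0 < Zgen n t})
      = cond_pmf (LF (D - R) R) {0<..}"
    using cond_map_pmf[of T "Zsurv m n" "{0<..}"] by (simp add: law)
  also have "\<dots> = geom_plus (1 - R / D)"
    using cond_pmf_LF_positive[of "D - R" R] params \<open>1 \<le> D\<close> by (simp add: diff_divide_distrib)
  finally show ?thesis unfolding T_def D_def R_def .
qed

theorem lemma3p3:
  fixes a b :: "nat \<Rightarrow> real" and n :: nat
  assumes env: "\<And>k. 1 \<le> k \<Longrightarrow> k \<le> n \<Longrightarrow> 0 < a k \<and> 0 < b k \<and> 1 \<le> a k + b k"
  defines "T \<equiv> gw_tree a b 0 n"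
  defines "C \<equiv> cond_pmf T {t. 0 < Zgen n t}"
  shows "(\<forall>t \<in> set_pmf T. \<forall>l m. l \<le> m \<and> m \<le> n \<longrightarrow> Zsurv l n t \<le> Zsurv m n t)
     \<and> (\<forall>m. m \<le> n \<longrightarrow>
           map_pmf (Zsurv m n) C = geom_plus (1 - R_env a b m / (Pi_env a n + R_env a b n)))
     \<and> (\<forall>l m. l < m \<and> m \<le> n \<longrightarrow>
           map_pmf (Zsurv m n) C =
           bind_pmf (map_pmf (Zsurv l n) C)
             (\<lambda>z. map_pmf sum_list
                (iid_list z (geom_plus (1 - (R_env a b m - R_env a b l) / (Pi_env a n + R_env a b n - R_env a b l))))))"
proof -
  have valid: "valid_env a b n" using env unfolding valid_env_def by auto
  define D where "D = Pi_env a n + R_env a b n"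
  have law: "map_pmf (Zsurv m n) C = geom_plus (1 - R_env a b m / D)" if "m \<le> n" for m
    unfolding C_def T_def D_def using map_pmf_Zsurv_cond_pmf[OF valid that] .
  have compound: "map_pmf (Zsurv m n) C
      = compound_pmf (map_pmf (Zsurv l n) C) (geom_plus (1 - (R_env a b m - R_env a b l) / (D - R_env a b l)))"
    if "l < m" "m \<le> n" for l m
  proof -
    have "0 \<le> R_env a b l" "R_env a b l \<le> R_env a b m" "R_env a b m < D"
      using that R_env_nonneg[OF valid, of l] R_env_mono[OF valid, of l m] R_env_mono[OF valid, of m n]
        Pi_env_pos[OF valid, of n]
      unfolding D_def by auto
    then show ?thesis
      using that law[of l] law[of m] geom_plus_split[of "R_env a b l" "R_env a b m" D] by simp
  qed
  show ?thesis
    using Zsurv_mono law compound unfolding D_def compound_pmf_def by auto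
qed

end
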